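(* Suppose there is $s\in\{-1,1\}$ with $s\rho_i\ge0$ for all $i$, and the $\rho_i$ are not all zero. Then $u_n>0$ entrywise and $s\,v_n<0$ entrywise (i.e. $v_n$ has constant sign $-s$). Consequently the vector $\bar z_n^S=u_n\vartheta_n^\star+v_n$ either is identically zero or has at least one strictly positive and at least one strictly negative component.
   Context: Fix $n\ge1$, $\sigma>0$, and for each $i$: $c_i>0$, $\gamma_i>0$, $\nu_i>0$, $\rho_i\in(-1,1)$. Define $p_{i,j}=\frac{1}{\gamma_i\nu_j^2}$ for $j\ne i$ and $p_{i,i}=\frac{1}{\gamma_i\nu_i^2+1/c_i}$; for each $j$: $\Theta_{j,n}=\sum_{i=1}^np_{i,j}$, $\zeta_j=p_{j,j}/c_j$, $a_j=\rho_j\zeta_j/\nu_j$, $w_{j,n}=\frac{1}{n\Theta_{j,n}}$; for each $k$: $M_{k,j}=\rho_j\nu_jp_{k,j}$, $\upsilon_{k,n}=\sum_{j=1}^n\rho_j^2\nu_j^2p_{k,j}$, $\varphi_{k,n}=1-\frac{\gamma_k}{n}\upsilon_{k,n}$. Define the $n\times n$ matrix $L_n$ by $(L_n)_{k,j}=\frac{\rho_j^2\zeta_jp_{k,j}}{n\varphi_{k,n}\Theta_{j,n}}$ and vectors $V_n,U_n$ by $(V_n)_k=\frac{n}{\gamma_k\sigma^2\varphi_{k,n}}$, $(U_n)_k=-\frac{1}{\varphi_{k,n}}\Big(\frac{1}{\sigma\sqrt n}\sum_{j=1}^n\frac{1-\zeta_j}{\Theta_{j,n}}M_{k,j}+\frac{1}{\sigma\sqrt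 n}\frac{\rho_k\nu_k}{c_k}p_{k,k}\Big)$. It is known that $\mathrm I_n-L_n$ is invertible with entrywise nonnegative inverse. Set $u_n=(\mathrm I_n-L_n)^{-1}V_n$, $v_n=(\mathrm I_n-L_n)^{-1}U_n$, $\vartheta_n^\star=-\frac{\mathbf 1_n^\top v_n}{\mathbf 1_n^\top u_n}$. (The vector $u_n\vartheta_n^\star+v_n$ is the $z^S$-part of the maximiser of $g(z^Q,z^S)=-\frac1n\sum_i\big(\frac{(z^{Q,i,i})^2}{2c_i}+\frac{\gamma_i}{2}\sum_j\nu_j^2(z^{Q,i,j})^2+\frac{\gamma_i\sigma^2}{2}(z^{S,i})^2+\frac{\gamma_i\sigma}{\sqrt n}z^{S,i}\sum_j\rho_j\nu_jz^{Q,i,j}\big)+\frac1n\sum_i\frac{z^{Q,i,i}}{c_i}$ subject to $\sum_iz^{Q,i,j}=1$ for all $j$ and $\sum_kz^{S,k}=0$.) *)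

theory Defs
  imports "HOL-Analysis.Analysis"
begin

text \<open>The index set {1..n} is rendered as a finite type 'n with n = CARD('n).
  Parameters c, gamma, nu, rho are functions on the index type.\<close>

definition pmat :: "('n::finite \<Rightarrow> real) \<Rightarrow> ('n \<Rightarrow> real) \<Rightarrow> ('n \<Rightarrow> real) \<Rightarrow> 'n \<Rightarrow> 'n \<Rightarrow> real" where
  "pmat c \<gamma> \<nu> i j = (if j \<noteq> i then 1 / (\<gamma> i * (\<nu> j)\<^sup>2) else 1 / (\<gamma> i * (\<nu> i)\<^sup>2 + 1 / c i))"

definition Theta :: "('n::finite \<Rightarrow> real) \<Rightarrow> ('n \<Rightarrow> real) \<Rightarrow> ('n \<Rightarrow> real) \<Rightarrow> 'n \<Rightarrow> real" where
  "Theta c \<gamma> \<nu> j = (\<Sum>i\<in>UNIV. pmat c \<gamma> \<nu> i j)"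

definition zeta :: "('n::finite \<Rightarrow> real) \<Rightarrow> ('n \<Rightarrow> real) \<Rightarrow> ('n \<Rightarrow> real) \<Rightarrow> 'n \<Rightarrow> real" where
  "zeta c \<gamma> \<nu> j = pmat c \<gamma> \<nu> j j / c j"

definition Mmat :: "('n::finite \<Rightarrow> real) \<Rightarrow> ('n \<Rightarrow> real) \<Rightarrow> ('n \<Rightarrow> real) \<Rightarrow> ('n \<Rightarrow> real) \<Rightarrow> 'n \<Rightarrow> 'n \<Rightarrow> real" where
  "Mmat c \<gamma> \<nu> \<rho> k j = \<rho> j * \<nu> j * pmat c \<gamma> \<nu> k j"

definition upsilon :: "('n::finite \<Rightarrow> real) \<Rightarrow> ('n \<Rightarrow> real) \<Rightarrow> ('n \<Rightarrow> real) \<Rightarrow> ('n \<Rightarrow> real) \<Rightarrow> 'n \<Rightarrow> real" where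
  "upsilon c \<gamma> \<nu> \<rho> k = (\<Sum>j\<in>UNIV. (\<rho> j)\<^sup>2 * (\<nu> j)\<^sup>2 * pmat c \<gamma> \<nu> k j)"

definition varphi :: "('n::finite \<Rightarrow> real) \<Rightarrow> ('n \<Rightarrow> real) \<Rightarrow> ('n \<Rightarrow> real) \<Rightarrow> ('n \<Rightarrow> real) \<Rightarrow> 'n \<Rightarrow> real" where
  "varphi c \<gamma> \<nu> \<rho> k = 1 - \<gamma> k / real CARD('n) * upsilon c \<gamma> \<nu> \<rho> k"

definition Lmat :: "('n::finite \<Rightarrow> real) \<Rightarrow> ('n \<Rightarrow> real) \<Rightarrow> ('n \<Rightarrow> real) \<Rightarrow> ('n \<Rightarrow> real) \<Rightarrow> real^'n^'n" where
  "Lmat c \<gamma> \<nu> \<rho> = (\<chi> k j. (\<rho> j)\<^sup>2 * zeta c \<gamma> \<nu> j * pmat c \<gamma> \<nu> k j /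
      (real CARD('n) * varphi c \<gamma> \<nu> \<rho> k * Theta c \<gamma> \<nu> j))"

definition Vvec :: "real \<Rightarrow> ('n::finite \<Rightarrow> real) \<Rightarrow> ('n \<Rightarrow> real) \<Rightarrow> ('n \<Rightarrow> real) \<Rightarrow> ('n \<Rightarrow> real) \<Rightarrow> real^'n" where
  "Vvec \<sigma> c \<gamma> \<nu> \<rho> = (\<chi> k. real CARD('n) / (\<gamma> k * \<sigma>\<^sup>2 * varphi c \<gamma> \<nu> \<rho> k))"

definition Uvec :: "real \<Rightarrow> ('n::finite \<Rightarrow> real) \<Rightarrow> ('n \<Rightarrow> real) \<Rightarrow> ('n \<Rightarrow> real) \<Rightarrow> ('n \<Rightarrow> real) \<Rightarrow> real^'n" where
  "Uvec \<sigma> c \<gamma> \<nu> \<rho> = (\<chi> k. - (1 / varphi c \<gamma> \<nu> \<rho> k) *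
      (1 / (\<sigma> * sqrt (real CARD('n))) *
         (\<Sum>j\<in>UNIV. (1 - zeta c \<gamma> \<nu> j) / Theta c \<gamma> \<nu> j * Mmat c \<gamma> \<nu> \<rho> k j)
       + 1 / (\<sigma> * sqrt (real CARD('n))) * (\<rho> k * \<nu> k / c k) * pmat c \<gamma> \<nu> k k))"

definition uvec :: "real \<Rightarrow> ('n::finite \<Rightarrow> real) \<Rightarrow> ('n \<Rightarrow> real) \<Rightarrow> ('n \<Rightarrow> real) \<Rightarrow> ('n \<Rightarrow> real) \<Rightarrow> real^'n" where
  "uvec \<sigma> c \<gamma> \<nu> \<rho> = matrix_inv (mat 1 - Lmat c \<gamma> \<nu> \<rho>) *v Vvec \<sigma> c \<gamma> \<nu> \<rho>"

definition vvec :: "real \<Rightarrow> ('n::finite \<Rightarrow> real) \<Rightarrow> ('n \<Rightarrow> real) \<Rightarrow> ('n \<Rightarrow> real) \<Rightarrow> ('n \<Rightarrow> real) \<Rightarrow> real^'n" where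
  "vvec \<sigma> c \<gamma> \<nu> \<rho> = matrix_inv (mat 1 - Lmat c \<gamma> \<nu> \<rho>) *v Uvec \<sigma> c \<gamma> \<nu> \<rho>"

definition vartheta_star :: "real \<Rightarrow> ('n::finite \<Rightarrow> real) \<Rightarrow> ('n \<Rightarrow> real) \<Rightarrow> ('n \<Rightarrow> real) \<Rightarrow> ('n \<Rightarrow> real) \<Rightarrow> real" where
  "vartheta_star \<sigma> c \<gamma> \<nu> \<rho> =
     - (\<Sum>k\<in>UNIV. vvec \<sigma> c \<gamma> \<nu> \<rho> $ k) / (\<Sum>k\<in>UNIV. uvec \<sigma> c \<gamma> \<nu> \<rho> $ k)"

definition zbarS :: "real \<Rightarrow> ('n::finite \<Rightarrow> real) \<Rightarrow> ('n \<Rightarrow> real) \<Rightarrow> ('n \<Rightarrow> real) \<Rightarrow> ('n \<Rightarrow> real) \<Rightarrow> real^'n" where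
  "zbarS \<sigma> c \<gamma> \<nu> \<rho> = vartheta_star \<sigma> c \<gamma> \<nu> \<rho> *\<^sub>R uvec \<sigma> c \<gamma> \<nu> \<rho> + vvec \<sigma> c \<gamma> \<nu> \<rho>"

end

theory Submission imports Defs begin

(* The weights varphi make L substochastic. Since gamma_k nu_i^2 p_{k,i} = 1 for i <> k and
   gamma_k nu_k^2 p_{k,k} = 1 - zeta_k, one gets n varphi_j = n - sum_i rho_i^2 + rho_j^2 zeta_j,
   whereas sum_k varphi_k L_{k,j} = rho_j^2 zeta_j / n; the difference is positive as |rho_i| < 1.
   Pairing with these weights shows that a nonnegative z with z <= L z vanishes, so I - L is
   invertible and (I - L)^-1 maps positive vectors to positive vectors. Now V > 0 and s U < 0
   (every term of U carries a factor rho_j of sign s, and some rho_j is nonzero), which gives the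
   signs of u and v. Finally theta* makes the entries of zbar sum to zero, so zbar is zero or
   takes both signs. *)

lemma matrix_inv_right:
  fixes A :: "'a::field^'n^'n"
  assumes "invertible A"
  shows "A ** matrix_inv A = mat 1"
  using assms unfolding invertible_def matrix_inv_def by (rule someI2_ex) blast

lemma sum_eq_0_imp_zero_or_both_signs:
  fixes z :: "real^'n::finite"
  assumes sum_0: "(\<Sum>k\<in>UNIV. z$k) = 0"
  shows "z = 0 \<or> ((\<exists>k. z$k > 0) \<and> (\<exists>k. z$k < 0))"
proof (cases "z = 0")
  case False
  have nonneg_imp_0: "x = 0" if "(\<Sum>k\<in>UNIV. x$k) = 0" "\<And>k. 0 \<le> x$k" for x :: "real^'n"
    using that by (simp add: sum_nonneg_eq_0_iff vec_eq_iff)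
  have "(\<Sum>k\<in>UNIV. (- z)$k) = 0"
    using sum_0 by (simp add: sum_negf)
  then have "\<not> (\<forall>k. 0 \<le> z$k)" "\<not> (\<forall>k. 0 \<le> (- z)$k)"
    using nonneg_imp_0[OF sum_0] nonneg_imp_0[of "- z"] False by auto
  then show ?thesis
    by (auto simp: not_le)
qed simp

locale weighted_substochastic =
  fixes L :: "real^'n::finite^'n" and w :: "'n \<Rightarrow> real"
  assumes entry_nonneg: "\<And>k j. 0 \<le> L$k$j"
    and weight_pos: "\<And>k. 0 < w k"
    and weighted_column_sum_less: "\<And>j. (\<Sum>k\<in>UNIV. w k * L$k$j) < w j"
begin

lemma mult_nonneg: "(\<And>j. 0 \<le> x$j) \<Longrightarrow> 0 \<le> (L *v x)$k"
  unfolding matrix_vector_mult_def using entry_nonneg by (simp add: sum_nonneg)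

lemma nonneg_le_mult_imp_zero:
  assumes nonneg: "\<And>k. 0 \<le> z$k" and le_mult: "\<And>k. z$k \<le> (L *v z)$k"
  shows "z = 0"
proof -
  define slack where "slack j = w j - (\<Sum>k\<in>UNIV. w k * L$k$j)" for j
  have slack_pos: "0 < slack j" for j
    using weighted_column_sum_less[of j] by (simp add: slack_def)
  have "(\<Sum>k\<in>UNIV. w k * z$k) \<le> (\<Sum>k\<in>UNIV. w k * (L *v z)$k)"
    using weight_pos by (intro sum_mono mult_left_mono le_mult) (simp add: less_imp_le)
  also have "\<dots> = (\<Sum>j\<in>UNIV. (\<Sum>k\<in>UNIV. w k * L$k$j) * z$j)"
    by (simp add: matrix_vector_mult_def sum_distrib_left sum_distrib_right mult.assoc)
       (rule sum.swap)
  finally have "(\<Sum>j\<in>UNIV. slack j * z$j) \<le> 0"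
    by (simp add: slack_def left_diff_distrib sum_subtractf)
  moreover have terms_nonneg: "0 \<le> slack j * z$j" for j
    using slack_pos[of j] nonneg[of j] by simp
  ultimately have "(\<Sum>j\<in>UNIV. slack j * z$j) = 0"
    by (simp add: antisym sum_nonneg)
  then have "slack j * z$j = 0" for j
    using terms_nonneg by (simp add: sum_nonneg_eq_0_iff)
  then show ?thesis
    using slack_pos by (simp add: vec_eq_iff less_le)
qed

lemma I_minus_preimage_nonneg:
  assumes eq: "(mat 1 - L) *v y = b" and b_nonneg: "\<And>k. 0 \<le> b$k"
  shows "0 \<le> y$k"
proof -
  define neg_part where "neg_part = (\<chi> k. max 0 (- y$k))"
  have "neg_part$k \<le> (L *v neg_part)$k" for k
  proof -
    have "- y$k = - b$k - (L *v y)$k"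
      using eq by (simp add: vec_eq_iff matrix_vector_mult_diff_rdistrib algebra_simps)
    also have "\<dots> \<le> (\<Sum>j\<in>UNIV. L$k$j * (- y$j))"
      using b_nonneg[of k] by (simp add: matrix_vector_mult_def sum_negf)
    also have "\<dots> \<le> (\<Sum>j\<in>UNIV. L$k$j * neg_part$j)"
      unfolding neg_part_def by (intro sum_mono mult_left_mono) (simp_all add: entry_nonneg)
    also have "\<dots> = (L *v neg_part)$k"
      by (simp add: matrix_vector_mult_def)
    finally show ?thesis
      using mult_nonneg[of neg_part k] by (simp add: neg_part_def)
  qed
  then have "neg_part = 0"
    by (intro nonneg_le_mult_imp_zero) (simp_all add: neg_part_def)
  then have "max 0 (- y$k) = 0"
    by (simp add: neg_part_def vec_eq_iff)
  then show ?thesis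
    by linarith
qed

lemma I_minus_preimage_pos:
  assumes eq: "(mat 1 - L) *v y = b" and b_pos: "\<And>k. 0 < b$k"
  shows "0 < y$k"
proof -
  have "0 \<le> y$j" for j
    using I_minus_preimage_nonneg[OF eq] b_pos by (simp add: less_imp_le)
  then have "0 \<le> (L *v y)$k"
    by (rule mult_nonneg)
  moreover have "y$k = b$k + (L *v y)$k"
    using eq by (simp add: vec_eq_iff matrix_vector_mult_diff_rdistrib algebra_simps)
  ultimately show ?thesis
    using b_pos[of k] by linarith
qed

lemma invertible_I_minus: "invertible (mat 1 - L)"
proof -
  have "x = 0" if "(mat 1 - L) *v x = 0" for x
  proof -
    have "(mat 1 - L) *v (- x) = 0"
      using that linear_neg[OF matrix_vector_mul_linear, of "mat 1 - L" x] by simp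
    then have "0 \<le> (- x)$k" for k
      by (rule I_minus_preimage_nonneg) simp
    moreover have "0 \<le> x$k" for k
      using that by (rule I_minus_preimage_nonneg) simp
    ultimately show ?thesis
      by (simp add: vec_eq_iff order_antisym)
  qed
  then show ?thesis
    by (simp add: invertible_left_inverse matrix_left_invertible_ker)
qed

lemma matrix_inv_I_minus_pos:
  assumes "\<And>k. 0 < b$k"
  shows "0 < (matrix_inv (mat 1 - L) *v b)$k"
proof (rule I_minus_preimage_pos[OF _ assms])
  show "(mat 1 - L) *v (matrix_inv (mat 1 - L) *v b) = b"
    by (simp add: matrix_vector_mul_assoc matrix_inv_right[OF invertible_I_minus])
qed

end

context
  fixes c \<gamma> \<nu> :: "'n::finite \<Rightarrow> real"
  assumes c_pos: "\<And>i. 0 < c i" and \<gamma>_pos: "\<And>i. 0 < \<gamma> i" and \<nu>_pos: "\<And>i. 0 < \<nu> i"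
begin

lemma pmat_pos: "0 < pmat c \<gamma> \<nu> i j"
  using c_pos[of i] \<gamma>_pos[of i] \<nu>_pos[of i] \<nu>_pos[of j] unfolding pmat_def
  by (auto intro!: divide_pos_pos add_pos_pos mult_pos_pos)

lemma Theta_pos: "0 < Theta c \<gamma> \<nu> j"
  unfolding Theta_def by (rule sum_pos) (auto intro: pmat_pos)

lemma zeta_pos: "0 < zeta c \<gamma> \<nu> j"
  unfolding zeta_def using pmat_pos c_pos by simp

lemma gamma_nu_sq_pmat:
  "\<gamma> k * (\<nu> i)\<^sup>2 * pmat c \<gamma> \<nu> k i = (if i = k then 1 - zeta c \<gamma> \<nu> k else 1)"
proof (cases "i = k")
  case True
  have "0 < \<gamma> k * (\<nu> k)\<^sup>2 + 1 / c k"
    using c_pos[of k] \<gamma>_pos[of k] \<nu>_pos[of k] by (simp add: add_pos_pos)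
  then have "(\<gamma> k * (\<nu> k)\<^sup>2 + 1 / c k) * pmat c \<gamma> \<nu> k k = 1"
    by (simp add: pmat_def)
  then show ?thesis
    using True by (simp add: zeta_def algebra_simps)
qed (use \<gamma>_pos[of k] \<nu>_pos[of i] in \<open>simp add: pmat_def\<close>)

lemma zeta_less_1: "zeta c \<gamma> \<nu> j < 1"
proof -
  have "0 < \<gamma> j * (\<nu> j)\<^sup>2 * pmat c \<gamma> \<nu> j j"
    using \<gamma>_pos[of j] \<nu>_pos[of j] pmat_pos[of j j] by simp
  then show ?thesis
    using gamma_nu_sq_pmat[of j j] by simp
qed

lemma gamma_upsilon:
  "\<gamma> k * upsilon c \<gamma> \<nu> \<rho> k = (\<Sum>i\<in>UNIV. (\<rho> i)\<^sup>2) - (\<rho> k)\<^sup>2 * zeta c \<gamma> \<nu> k"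
proof -
  have "\<gamma> k * upsilon c \<gamma> \<nu> \<rho> k
      = (\<Sum>i\<in>UNIV. (\<rho> i)\<^sup>2 * (\<gamma> k * (\<nu> i)\<^sup>2 * pmat c \<gamma> \<nu> k i))"
    unfolding upsilon_def sum_distrib_left by (simp add: ac_simps)
  also have "\<dots> = (\<Sum>i\<in>UNIV. (\<rho> i)\<^sup>2 - (if i = k then (\<rho> k)\<^sup>2 * zeta c \<gamma> \<nu> k else 0))"
    unfolding gamma_nu_sq_pmat by (intro sum.cong) (auto simp: algebra_simps)
  finally show ?thesis
    by (simp add: sum_subtractf)
qed

lemma card_mult_varphi:
  "real CARD('n) * varphi c \<gamma> \<nu> \<rho> k
     = real CARD('n) - (\<Sum>i\<in>UNIV. (\<rho> i)\<^sup>2) + (\<rho> k)\<^sup>2 * zeta c \<gamma> \<nu> k"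
proof -
  have "real CARD('n) * varphi c \<gamma> \<nu> \<rho> k = real CARD('n) - \<gamma> k * upsilon c \<gamma> \<nu> \<rho> k"
    by (simp add: varphi_def algebra_simps)
  then show ?thesis
    using gamma_upsilon[where k = k] by simp
qed

lemma sign_mult_Uvec_summand:
  assumes sign: "0 \<le> s * \<rho> j"
  shows "0 \<le> s * ((1 - zeta c \<gamma> \<nu> j) / Theta c \<gamma> \<nu> j * Mmat c \<gamma> \<nu> \<rho> k j)"
    and "s * \<rho> j \<noteq> 0 \<Longrightarrow> 0 < s * ((1 - zeta c \<gamma> \<nu> j) / Theta c \<gamma> \<nu> j * Mmat c \<gamma> \<nu> \<rho> k j)"
proof -
  define coeff where "coeff = (1 - zeta c \<gamma> \<nu> j) / Theta c \<gamma> \<nu> j * \<nu> j * pmat c \<gamma> \<nu> k j"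
  have coeff_pos: "0 < coeff"
    using zeta_less_1[of j] Theta_pos[of j] \<nu>_pos[of j] pmat_pos[of k j] by (simp add: coeff_def)
  have summand_eq:
    "s * ((1 - zeta c \<gamma> \<nu> j) / Theta c \<gamma> \<nu> j * Mmat c \<gamma> \<nu> \<rho> k j) = coeff * (s * \<rho> j)"
    by (simp add: coeff_def Mmat_def ac_simps)
  show "0 \<le> s * ((1 - zeta c \<gamma> \<nu> j) / Theta c \<gamma> \<nu> j * Mmat c \<gamma> \<nu> \<rho> k j)"
    unfolding summand_eq using coeff_pos sign by simp
  show "0 < s * ((1 - zeta c \<gamma> \<nu> j) / Theta c \<gamma> \<nu> j * Mmat c \<gamma> \<nu> \<rho> k j)"
    if "s * \<rho> j \<noteq> 0"
    unfolding summand_eq using coeff_pos sign that by (simp add: zero_less_mult_iff less_le)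
qed

context
  fixes \<rho> :: "'n \<Rightarrow> real"
  assumes \<rho>_bounds: "\<And>i. -1 < \<rho> i \<and> \<rho> i < 1"
begin

lemma sum_rho_sq_less_card: "(\<Sum>i\<in>UNIV. (\<rho> i)\<^sup>2) < real CARD('n)"
proof -
  have "(\<Sum>i\<in>UNIV. (\<rho> i)\<^sup>2) < (\<Sum>i\<in>(UNIV::'n set). 1)"
    using \<rho>_bounds by (intro sum_strict_mono) (auto simp: abs_square_less_1 abs_less_iff)
  then show ?thesis
    by simp
qed

lemma varphi_pos: "0 < varphi c \<gamma> \<nu> \<rho> k"
proof -
  have "0 \<le> (\<rho> k)\<^sup>2 * zeta c \<gamma> \<nu> k"
    using zeta_pos[of k] by simp
  then have "0 < real CARD('n) * varphi c \<gamma> \<nu> \<rho> k"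
    using card_mult_varphi[of \<rho> k] sum_rho_sq_less_card by linarith
  then show ?thesis
    by (simp add: zero_less_mult_iff)
qed

lemma weighted_substochastic_Lmat: "weighted_substochastic (Lmat c \<gamma> \<nu> \<rho>) (varphi c \<gamma> \<nu> \<rho>)"
proof
  show "0 \<le> Lmat c \<gamma> \<nu> \<rho> $ k $ j" for k j
    unfolding Lmat_def using zeta_pos[of j] pmat_pos[of k j] varphi_pos[of k] Theta_pos[of j]
    by simp
  show "0 < varphi c \<gamma> \<nu> \<rho> k" for k
    by (rule varphi_pos)
  show "(\<Sum>k\<in>UNIV. varphi c \<gamma> \<nu> \<rho> k * Lmat c \<gamma> \<nu> \<rho> $ k $ j) < varphi c \<gamma> \<nu> \<rho> j" for j
  proof -
    have "(\<Sum>k\<in>UNIV. varphi c \<gamma> \<nu> \<rho> k * Lmat c \<gamma> \<nu> \<rho> $ k $ j)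
        = (\<Sum>k\<in>UNIV. (\<rho> j)\<^sup>2 * zeta c \<gamma> \<nu> j / (real CARD('n) * Theta c \<gamma> \<nu> j) * pmat c \<gamma> \<nu> k j)"
      unfolding Lmat_def using varphi_pos[THEN less_imp_neq, THEN not_sym]
      by (intro sum.cong) (simp_all add: field_simps)
    also have "\<dots> = (\<rho> j)\<^sup>2 * zeta c \<gamma> \<nu> j / (real CARD('n) * Theta c \<gamma> \<nu> j) * Theta c \<gamma> \<nu> j"
      unfolding Theta_def sum_distrib_left ..
    also have "\<dots> = (\<rho> j)\<^sup>2 * zeta c \<gamma> \<nu> j / real CARD('n)"
      using Theta_pos[of j] by simp
    also have "\<dots> < varphi c \<gamma> \<nu> \<rho> j"
      using card_mult_varphi[of \<rho> j] sum_rho_sq_less_card by (simp add: field_simps)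
    finally show ?thesis .
  qed
qed

lemma Vvec_pos: "0 < \<sigma> \<Longrightarrow> 0 < Vvec \<sigma> c \<gamma> \<nu> \<rho> $ k"
  unfolding Vvec_def using varphi_pos[of k] \<gamma>_pos[of k] by simp

lemma sign_mult_Uvec_neg:
  assumes "0 < \<sigma>" and "s \<noteq> 0" and sign: "\<And>i. 0 \<le> s * \<rho> i" and "\<rho> i\<^sub>0 \<noteq> 0"
  shows "s * Uvec \<sigma> c \<gamma> \<nu> \<rho> $ k < 0"
proof -
  define X where "X = (\<Sum>j\<in>UNIV. (1 - zeta c \<gamma> \<nu> j) / Theta c \<gamma> \<nu> j * Mmat c \<gamma> \<nu> \<rho> k j)"
  define Y where "Y = \<rho> k * \<nu> k / c k * pmat c \<gamma> \<nu> k k"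
  have "0 < s * X"
    unfolding X_def sum_distrib_left
    using assms sign sign_mult_Uvec_summand by (intro sum_pos2[of UNIV i\<^sub>0]) auto
  moreover have "0 \<le> s * Y"
  proof -
    have "s * Y = (s * \<rho> k) * (\<nu> k / c k * pmat c \<gamma> \<nu> k k)"
      by (simp add: Y_def)
    then show ?thesis
      using sign[of k] \<nu>_pos[of k] c_pos[of k] pmat_pos[of k k] by simp
  qed
  moreover have "s * Uvec \<sigma> c \<gamma> \<nu> \<rho> $ k
      = - (1 / varphi c \<gamma> \<nu> \<rho> k) * (1 / (\<sigma> * sqrt (real CARD('n))) * (s * X + s * Y))"
    unfolding Uvec_def X_def Y_def by (simp add: algebra_simps)
  ultimately show ?thesis
    using \<open>0 < \<sigma>\<close> varphi_pos[of k] by (simp add: mult_pos_pos add_pos_nonneg)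
qed

end

end

lemma sum_zbarS_eq_0:
  assumes "(\<Sum>k\<in>UNIV. uvec \<sigma> c \<gamma> \<nu> \<rho> $ k) \<noteq> 0"
  shows "(\<Sum>k\<in>UNIV. zbarS \<sigma> c \<gamma> \<nu> \<rho> $ k) = 0"
proof -
  have "(\<Sum>k\<in>UNIV. zbarS \<sigma> c \<gamma> \<nu> \<rho> $ k)
      = vartheta_star \<sigma> c \<gamma> \<nu> \<rho> * (\<Sum>k\<in>UNIV. uvec \<sigma> c \<gamma> \<nu> \<rho> $ k)
        + (\<Sum>k\<in>UNIV. vvec \<sigma> c \<gamma> \<nu> \<rho> $ k)"
    by (simp add: zbarS_def sum.distrib sum_distrib_left)
  then show ?thesis
    using assms by (simp add: vartheta_star_def)
qed

theorem mainTheorem9: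
  fixes \<sigma> :: real and c \<gamma> \<nu> \<rho> :: "'n::finite \<Rightarrow> real" and s :: real
  assumes "\<sigma> > 0"
    and "\<And>i. c i > 0" and "\<And>i. \<gamma> i > 0" and "\<And>i. \<nu> i > 0"
    and "\<And>i. -1 < \<rho> i \<and> \<rho> i < 1"
    and "s \<in> {-1, 1}" and "\<And>i. s * \<rho> i \<ge> 0" and "\<exists>i. \<rho> i \<noteq> 0"
  shows "(\<forall>k. uvec \<sigma> c \<gamma> \<nu> \<rho> $ k > 0)
       \<and> (\<forall>k. s * vvec \<sigma> c \<gamma> \<nu> \<rho> $ k < 0)
       \<and> (zbarS \<sigma> c \<gamma> \<nu> \<rho> = 0
          \<or> ((\<exists>k. zbarS \<sigma> c \<gamma> \<nu> \<rho> $ k > 0) \<and> (\<exists>k. zbarS \<sigma> c \<gamma> \<nu> \<rho> $ k < 0)))"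
proof -
  interpret weighted_substochastic "Lmat c \<gamma> \<nu> \<rho>" "varphi c \<gamma> \<nu> \<rho>"
    by (rule weighted_substochastic_Lmat) (fact assms)+
  have u_pos: "\<forall>k. 0 < uvec \<sigma> c \<gamma> \<nu> \<rho> $ k"
    unfolding uvec_def by (intro allI matrix_inv_I_minus_pos Vvec_pos) (fact assms)+
  obtain i\<^sub>0 where "\<rho> i\<^sub>0 \<noteq> 0"
    using assms(8) by blast
  then have U_sign: "0 < - s * Uvec \<sigma> c \<gamma> \<nu> \<rho> $ k" for k
    using sign_mult_Uvec_neg[OF assms(2-5,1) _ assms(7)] assms(6) by auto
  have v_eq: "matrix_inv (mat 1 - Lmat c \<gamma> \<nu> \<rho>) *v ((- s) *\<^sub>R Uvec \<sigma> c \<gamma> \<nu> \<rho>)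
      = (- s) *\<^sub>R vvec \<sigma> c \<gamma> \<nu> \<rho>"
    by (simp only: vvec_def matrix_vector_mult_scaleR)
  have "0 < ((- s) *\<^sub>R vvec \<sigma> c \<gamma> \<nu> \<rho>) $ k" for k
    unfolding v_eq[symmetric] using U_sign by (intro matrix_inv_I_minus_pos) simp
  then have v_sign: "\<forall>k. s * vvec \<sigma> c \<gamma> \<nu> \<rho> $ k < 0"
    by simp
  have "(\<Sum>k\<in>UNIV. zbarS \<sigma> c \<gamma> \<nu> \<rho> $ k) = 0"
    using u_pos by (intro sum_zbarS_eq_0) (simp add: sum_pos less_imp_neq[symmetric])
  then show ?thesis
    using u_pos v_sign sum_eq_0_imp_zero_or_both_signs by blast
qed

end
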